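(* For integers $i\ge 0$ and $j\ge 0$, let $g^{(2)}_{i,j}$ be the number of 2-generalized grand Motzkin paths of length $i$ and height $j$. Then for every $j\ge 0$, $$M^{(j)}(x):=\sum_{i\ge 0} g^{(2)}_{i,j}x^i=\frac{F(x)^{j+1}\,C\big(F(x)^2\big)^j}{x\big(1-2F(x)^2C(F(x)^2)\big)},$$ where $F(x)=\frac{x}{1-x-x^2}$ and $C(x)=\frac{1-\sqrt{1-4x}}{2x}$. Moreover, for $0\le j\le i$, $$g^{(2)}_{i,j}=\sum_{m=0}^{i}\sum_{l=0}^{i-j-2m}\binom{2m+j}{m}\binom{l+j+2m}{l}\binom{l}{i-j-2m-l}.$$
   Context: A 2-generalized grand Motzkin path of length $n$ is a lattice path in $\mathbb{Z}\times\mathbb{Z}$ starting at $(0,0)$ and ending at a point with $x$-coordinate $n$, using steps $U=(1,1)$, $D=(1,-1)$, $H=(1,0)$ and $H_2=(2,0)$, with no restriction of staying above the $x$-axis. Its height is its final $y$-coordinate. $F(x)$ is the generating function of the Fibonacci numbers and $C(x)$ that of the Catalan numbers; $C(F(x)^2)$ denotes composition of formal power series. Sums with upper limit smaller than the lower limit are empty. *)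

theory Defs
  imports "HOL-Computational_Algebra.Formal_Power_Series"
begin

datatype step = U | D | H | H2

fun step_len :: "step \<Rightarrow> nat" where
  "step_len U = 1" | "step_len D = 1" | "step_len H = 1" | "step_len H2 = 2"

fun step_rise :: "step \<Rightarrow> int" where
  "step_rise U = 1" | "step_rise D = -1" | "step_rise H = 0" | "step_rise H2 = 0"

text \<open>A 2-generalized grand Motzkin path is a word over the steps; its length is the
 final x-coordinate and its height the final y-coordinate.\<close>
definition path_length :: "step list \<Rightarrow> nat" where
  "path_length p = (\<Sum>s\<leftarrow>p. step_len s)"

definition path_height :: "step list \<Rightarrow> int" where
  "path_height p = (\<Sum>s\<leftarrow>p. step_rise s)"

definition g2 :: "nat \<Rightarrow> nat \<Rightarrow> nat" where
  "g2 i j = card {p. path_length p = i \<and> path_height p = int j}"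

definition catalan :: "nat \<Rightarrow> nat" where
  "catalan n = (2 * n choose n) div (n + 1)"

definition fibF :: "real fps" where
  "fibF = fps_X / (1 - fps_X - fps_X ^ 2)"

definition catC :: "real fps" where
  "catC = Abs_fps (\<lambda>n. real (catalan n))"

definition Mj :: "nat \<Rightarrow> real fps" where
  "Mj j = Abs_fps (\<lambda>i. real (g2 i j))"

end

theory Submission
  imports Defs
begin

(*
  Removing the first step of a path shows that the numbers of paths of length n ending at
  height h (h any integer) satisfy g(h,0) = [h = 0] and
  g(h,n+1) = g(h-1,n) + g(h+1,n) + g(h,n) + g(h,n-1), and this recurrence determines them.
  In terms of generating functions it reads (1 - x - x^2) G_h = [h = 0] + x (G_{h-1} + G_{h+1}),
  which is solved by G_h = Z^|h| W as soon as (1 - x - x^2) Z = x (1 + Z^2) and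
  (1 - x - x^2) W = 1 + 2 x Z W. With F = x/(1 - x - x^2) the first equation holds for
  Z = F C(F^2) because C = 1 + x C^2, which follows from (1 - 2 x C)^2 = 1 - 4 x, i.e. from the
  binomial series of (1 - 4x)^(1/2); the second one then defines W.

  For the explicit formula, classify paths by the number k of U and D steps: these form a walk
  with steps +-1 ending at height j, counted by (k choose (k-j)/2), and the l flat steps are
  distributed over the k+1 gaps in (l+k choose l) ways, with i-k-l of them being H2.
  This count satisfies the same recurrence.
*)

unbundle fps_syntax

definition paths :: "nat \<Rightarrow> int \<Rightarrow> step list set" where
  "paths n h = {p. path_length p = n \<and> path_height p = h}"

lemma path_length_Nil [simp]: "path_length [] = 0"
  by (simp add: path_length_def)

lemma path_length_Cons [simp]: "path_length (s # p) = step_len s + path_length p"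
  by (simp add: path_length_def)

lemma path_height_Nil [simp]: "path_height [] = 0"
  by (simp add: path_height_def)

lemma path_height_Cons [simp]: "path_height (s # p) = step_rise s + path_height p"
  by (simp add: path_height_def)

lemma step_len_pos: "step_len s > 0"
  by (cases s) auto

lemma length_le_path_length: "length p \<le> path_length p"
proof (induction p)
  case (Cons s p)
  then show ?case
    using step_len_pos[of s] by simp
qed simp

lemma UNIV_step: "(UNIV :: step set) = {U, D, H, H2}"
  by (auto intro: step.exhaust)

lemma finite_paths: "finite (paths n h)"
proof (rule finite_subset)
  show "paths n h \<subseteq> {p. set p \<subseteq> UNIV \<and> length p \<le> n}"
    unfolding paths_def using length_le_path_length by auto
  show "finite {p. set p \<subseteq> (UNIV :: step set) \<and> length p \<le> n}"
    by (rule finite_lists_length_le) (simp add: UNIV_step)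
qed

lemma paths_0: "paths 0 h = (if h = 0 then {[]} else {})"
proof -
  have "path_length p = 0 \<longleftrightarrow> p = []" for p
    by (cases p) (use step_len_pos in auto)
  then show ?thesis
    unfolding paths_def by (simp add: set_eq_iff) (metis path_height_Nil)
qed

lemma paths_Suc:
  "paths (Suc n) h = (\<Union>s. Cons s ` {q. step_len s + path_length q = Suc n \<and> step_rise s + path_height q = h})"
proof (rule set_eqI)
  fix p
  show "p \<in> paths (Suc n) h \<longleftrightarrow> p \<in> (\<Union>s. Cons s ` {q. step_len s + path_length q = Suc n \<and> step_rise s + path_height q = h})"
    by (cases p) (auto simp: paths_def)
qed

lemma card_paths_Suc:
  "card (paths (Suc n) h) = card (paths n (h - 1)) + card (paths n (h + 1)) + card (paths n h)
     + (if n = 0 then 0 else card (paths (n - 1) h))"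
proof -
  define Q where "Q s = {q. step_len s + path_length q = Suc n \<and> step_rise s + path_height q = h}" for s
  have Q_steps: "Q U = paths n (h - 1)" "Q D = paths n (h + 1)" "Q H = paths n h"
    "Q H2 = (if n = 0 then {} else paths (n - 1) h)"
    by (auto simp: Q_def paths_def)
  have "finite (Q s)" for s
    by (cases s) (simp_all add: Q_steps finite_paths)
  then have "card (paths (Suc n) h) = (\<Sum>s\<in>UNIV. card (Cons s ` Q s))"
    unfolding paths_Suc Q_def[symmetric]
    by (subst card_UN_disjoint) (auto simp: UNIV_step)
  also have "\<dots> = (\<Sum>s\<in>UNIV. card (Q s))"
    by (simp add: card_image)
  finally show ?thesis
    by (simp add: UNIV_step Q_steps)
qed

definition grand_motzkin_rec :: "(int \<Rightarrow> nat \<Rightarrow> 'a::semiring_1) \<Rightarrow> bool" where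
  "grand_motzkin_rec Q \<longleftrightarrow> (\<forall>h. Q h 0 = (if h = 0 then 1 else 0)) \<and>
     (\<forall>h n. Q h (Suc n) = Q (h - 1) n + Q (h + 1) n + Q h n + (if n = 0 then 0 else Q h (n - 1)))"

lemma grand_motzkin_rec_unique:
  assumes "grand_motzkin_rec Q" and "grand_motzkin_rec R"
  shows "Q = R"
proof -
  have "Q h n = R h n" for h n
  proof (induction n arbitrary: h rule: less_induct)
    case (less n)
    with assms show ?case
      by (cases n) (auto simp: grand_motzkin_rec_def)
  qed
  then show ?thesis
    by blast
qed

lemma grand_motzkin_rec_of_nat:
  "grand_motzkin_rec Q \<Longrightarrow> grand_motzkin_rec (\<lambda>h n. of_nat (Q h n))"
  by (simp add: grand_motzkin_rec_def)

lemma grand_motzkin_rec_card_paths: "grand_motzkin_rec (\<lambda>h n. card (paths n h))"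
  by (simp add: grand_motzkin_rec_def paths_0 card_paths_Suc)

lemma Suc_dvd_central_binomial: "Suc m dvd (2 * m choose m)"
proof -
  have "Suc m * (2 * m choose Suc m) = (2 * m - m) * (2 * m choose m)"
    by (simp only: binomial_absorption binomial_absorb_comp)
  then have "Suc m * (2 * m choose Suc m) = m * (2 * m choose m)"
    by simp
  then have "2 * m choose m = Suc m * ((2 * m choose m) - (2 * m choose Suc m))"
    by (simp add: diff_mult_distrib2)
  then show ?thesis
    by (metis dvd_triv_left)
qed

lemma of_nat_catalan: "real (catalan m) = real (2 * m choose m) / (m + 1)"
  unfolding catalan_def using Suc_dvd_central_binomial[of m] by (simp add: real_of_nat_div)

lemma central_binomial_Suc: "Suc m * (2 * Suc m choose Suc m) = 2 * (2 * m + 1) * (2 * m choose m)"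
proof -
  have two_Suc: "2 * Suc m = Suc (Suc (2 * m))"
    by simp
  have "Suc (2 * m) choose m = Suc (2 * m) choose Suc m"
    using binomial_symmetric[of m "Suc (2 * m)"] by simp
  have "Suc m * (Suc m * (2 * Suc m choose Suc m)) = Suc m * (Suc (Suc (2 * m)) * (Suc (2 * m) choose m))"
    by (simp only: two_Suc Suc_times_binomial)
  also have "\<dots> = Suc (Suc (2 * m)) * (Suc m * (Suc (2 * m) choose Suc m))"
    by (metis \<open>Suc (2 * m) choose m = Suc (2 * m) choose Suc m\<close> mult.left_commute)
  also have "\<dots> = Suc m * (2 * (2 * m + 1) * (2 * m choose m))"
    by (simp only: Suc_times_binomial) simp
  finally show ?thesis
    by (metis mult_left_cancel nat.distinct(1))
qed

lemma catalan_Suc_ratio: "real (catalan (Suc m)) = real (catalan m) * (2 * (2 * m + 1)) / (m + 2)"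
proof -
  define a where "a = real (2 * m choose m)"
  define b where "b = real (2 * Suc m choose Suc m)"
  have "real (Suc m) * b = real (2 * (2 * m + 1)) * a"
    unfolding a_def b_def by (simp only: of_nat_mult[symmetric] central_binomial_Suc)
  then have "b = a * (2 * (2 * m + 1)) / (m + 1)"
    by (simp add: field_simps)
  then show ?thesis
    unfolding of_nat_catalan a_def[symmetric] b_def[symmetric] by simp
qed

lemma gbinomial_Suc_ratio: "(a::real) gchoose Suc k = (a gchoose k) * (a - of_nat k) / of_nat (Suc k)"
proof -
  have "of_nat (Suc k) * (a gchoose Suc k) = (a - of_nat k) * (a gchoose k)"
    using gbinomial_absorption[of k a] gbinomial_absorb_comp[of a k] by simp
  then show ?thesis
    by (simp add: field_simps del: of_nat_Suc)
qed

lemma gbinomial_half_Suc: "((1/2::real) gchoose Suc m) * (-4) ^ Suc m = -2 * real (catalan m)"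
proof (induction m)
  case 0
  then show ?case
    by (simp add: catalan_def)
next
  case (Suc m)
  have "((1/2::real) gchoose Suc (Suc m)) * (-4) ^ Suc (Suc m)
        = ((1/2::real) gchoose Suc m) * (-4) ^ Suc m * (2 * (2 * m + 1) / (m + 2))"
    by (subst gbinomial_Suc_ratio) (simp add: field_simps)
  also have "\<dots> = -2 * real (catalan (Suc m))"
    unfolding Suc catalan_Suc_ratio by simp
  finally show ?case .
qed

lemma sqrt_1_minus_4X_catalan:
  "fps_binomial (1/2) oo (fps_const (-4) * fps_X) = 1 - 2 * fps_X * catC"
proof (rule fps_ext)
  fix n
  show "(fps_binomial (1/2) oo (fps_const (-4) * fps_X)) $ n = (1 - 2 * fps_X * catC) $ n"
  proof (cases n)
    case (Suc m)
    have "(2 * fps_X * catC) $ n = 2 * real (catalan m)"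
      using Suc by (simp add: catC_def mult.assoc numeral_fps_const)
    with Suc show ?thesis
      using gbinomial_half_Suc[of m] by (simp add: fps_compose_linear)
  qed simp
qed

lemma sqrt_1_minus_4X_square:
  "(fps_binomial (1/2) oo (fps_const (-4) * fps_X))\<^sup>2 = (1 - 4 * fps_X :: real fps)"
proof -
  let ?c = "fps_const (-4) * fps_X :: real fps"
  have "(fps_binomial (1/2) oo ?c)\<^sup>2 = (fps_binomial (1/2))\<^sup>2 oo ?c"
    by (rule fps_compose_power) simp
  also have "(fps_binomial (1/2::real))\<^sup>2 = 1 + fps_X"
    by (simp add: fps_binomial_power fps_binomial_1)
  also have "(1 + fps_X) oo ?c = 1 + ?c"
    by (simp add: fps_compose_add_distrib)
  finally show ?thesis
    by (simp only: neg_numeral_fps_const[symmetric]) simp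
qed

lemma catC_quadratic: "catC = 1 + fps_X * catC\<^sup>2"
proof -
  have "(1 - 2 * fps_X * catC)\<^sup>2 = 1 - 4 * fps_X"
    using sqrt_1_minus_4X_square by (simp only: sqrt_1_minus_4X_catalan)
  then have "fps_X * (4 * (1 + fps_X * catC\<^sup>2 - catC)) = 0"
    by (simp add: power2_eq_square algebra_simps)
  then have "1 + fps_X * catC\<^sup>2 - catC = 0"
    by (simp only: mult_eq_0_iff fps_X_neq_zero numeral_neq_fps_zero simp_thms)
  then show ?thesis
    by simp
qed

lemma power_abs_solves_walk_equation:
  fixes p x z w :: "'a::comm_ring_1"
  assumes z: "p * z = x * (1 + z\<^sup>2)" and w: "p * w = 1 + 2 * x * z * w"
  shows "p * (z ^ nat \<bar>h\<bar> * w) = (if h = 0 then 1 else 0) + x * (z ^ nat \<bar>h - 1\<bar> * w + z ^ nat \<bar>h + 1\<bar> * w)"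
proof (cases "h = 0")
  case True
  with w show ?thesis
    by (simp add: algebra_simps)
next
  case False
  define k where "k = nat \<bar>h\<bar> - 1"
  have h: "nat \<bar>h\<bar> = Suc k"
    using False by (simp add: k_def)
  have neighbours: "z ^ nat \<bar>h - 1\<bar> + z ^ nat \<bar>h + 1\<bar> = z ^ k + z ^ Suc (Suc k)"
  proof (cases "h > 0")
    case True
    then have "nat \<bar>h - 1\<bar> = k" "nat \<bar>h + 1\<bar> = Suc (Suc k)"
      by (simp_all add: k_def)
    then show ?thesis
      by (simp only: add.commute)
  next
    case False
    with \<open>h \<noteq> 0\<close> have "nat \<bar>h + 1\<bar> = k" "nat \<bar>h - 1\<bar> = Suc (Suc k)"
      by (simp_all add: k_def)
    then show ?thesis
      by (simp only: add.commute)
  qed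
  have "p * (z ^ nat \<bar>h\<bar> * w) = z ^ k * w * (p * z)"
    by (simp add: h algebra_simps)
  also have "\<dots> = x * ((z ^ k + z ^ Suc (Suc k)) * w)"
    by (simp add: z power2_eq_square algebra_simps)
  also have "\<dots> = x * (z ^ nat \<bar>h - 1\<bar> * w + z ^ nat \<bar>h + 1\<bar> * w)"
    by (simp only: neighbours[symmetric] distrib_right)
  finally show ?thesis
    using False by simp
qed

lemma grand_motzkin_rec_fps_nth:
  fixes Q :: "int \<Rightarrow> 'a::comm_ring_1 fps"
  assumes "\<And>h. (1 - fps_X - fps_X\<^sup>2) * Q h = (if h = 0 then 1 else 0) + fps_X * (Q (h - 1) + Q (h + 1))"
  shows "grand_motzkin_rec (\<lambda>h n. Q h $ n)"
proof -
  have Q: "Q h = (if h = 0 then 1 else 0) + fps_X * (Q (h - 1) + Q (h + 1) + Q h) + fps_X\<^sup>2 * Q h" for h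
    using assms[of h] by (simp add: algebra_simps)
  have "Q h $ n = ((if h = 0 then 1 else 0) + fps_X * (Q (h - 1) + Q (h + 1) + Q h) + fps_X\<^sup>2 * Q h) $ n" for h n
    by (subst Q) (rule refl)
  then show ?thesis
    unfolding grand_motzkin_rec_def by (simp add: fps_X_power_mult_nth)
qed

lemma fibF_eq: "fibF = fps_X * inverse (1 - fps_X - fps_X\<^sup>2)"
  unfolding fibF_def by (simp add: fps_divide_unit)

lemma catC_fib_quadratic: "catC oo fibF\<^sup>2 = 1 + fibF\<^sup>2 * (catC oo fibF\<^sup>2)\<^sup>2"
proof -
  have "fibF\<^sup>2 $ 0 = 0"
    by (simp add: fibF_eq power2_eq_square)
  then have "(1 + fps_X * catC\<^sup>2) oo fibF\<^sup>2 = 1 + fibF\<^sup>2 * (catC oo fibF\<^sup>2)\<^sup>2"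
    by (simp add: fps_compose_add_distrib fps_compose_mult_distrib fps_compose_power)
  then show ?thesis
    using catC_quadratic by simp
qed

lemma Mj_eq_power:
  "Mj j = (fibF * (catC oo fibF\<^sup>2)) ^ j
     * (inverse (1 - fps_X - fps_X\<^sup>2) * inverse (1 - 2 * fibF\<^sup>2 * (catC oo fibF\<^sup>2)))"
proof -
  define P :: "real fps" where "P = 1 - fps_X - fps_X\<^sup>2"
  define A where "A = catC oo fibF\<^sup>2"
  define Z where "Z = fibF * A"
  define V where "V = inverse (1 - 2 * fibF\<^sup>2 * A)"
  define W where "W = inverse P * V"
  have P_inverse: "P * inverse P = 1"
    by (simp add: P_def inverse_mult_eq_1')
  have fib: "fibF = fps_X * inverse P"
    unfolding P_def by (rule fibF_eq)
  have "P * Z = fps_X * A"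
    by (simp add: Z_def fib P_inverse algebra_simps)
  then have Z_eq: "P * Z = fps_X * (1 + Z\<^sup>2)"
    using catC_fib_quadratic by (simp add: Z_def A_def[symmetric] power_mult_distrib algebra_simps)
  have "(1 - 2 * fibF\<^sup>2 * A) $ 0 \<noteq> 0"
    by (simp add: fib power2_eq_square)
  then have "(1 - 2 * fibF\<^sup>2 * A) * V = 1"
    unfolding V_def by (rule inverse_mult_eq_1')
  then have "V - 2 * fibF\<^sup>2 * A * V = 1"
    by (simp add: algebra_simps)
  then have "V = 1 + 2 * fibF\<^sup>2 * A * V"
    by (simp add: algebra_simps)
  moreover have "P * W = V"
    by (simp add: W_def P_inverse mult.assoc[symmetric])
  ultimately have W_eq: "P * W = 1 + 2 * fps_X * Z * W"
    by (simp add: W_def Z_def fib power2_eq_square algebra_simps)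
  have "grand_motzkin_rec (\<lambda>h n. (Z ^ nat \<bar>h\<bar> * W) $ n)"
    by (rule grand_motzkin_rec_fps_nth)
       (use power_abs_solves_walk_equation[OF Z_eq W_eq] in \<open>simp add: P_def\<close>)
  then have "(\<lambda>h n. real (card (paths n h))) = (\<lambda>h n. (Z ^ nat \<bar>h\<bar> * W) $ n)"
    by (rule grand_motzkin_rec_unique[OF grand_motzkin_rec_of_nat[OF grand_motzkin_rec_card_paths]])
  then have "Mj j = Z ^ j * W"
    by (simp add: fps_eq_iff Mj_def g2_def paths_def fun_eq_iff)
  then show ?thesis
    by (simp add: Z_def A_def W_def V_def P_def)
qed

lemma Mj_closed_form:
  "Mj j = (fibF ^ (j + 1) * (catC oo fibF\<^sup>2) ^ j) / (fps_X * (1 - 2 * fibF\<^sup>2 * (catC oo fibF\<^sup>2)))"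
proof -
  let ?V = "1 - 2 * fibF\<^sup>2 * (catC oo fibF\<^sup>2)"
  have "?V $ 0 \<noteq> 0"
    by (simp add: fibF_eq power2_eq_square)
  have numerator: "fibF ^ (j + 1) * (catC oo fibF\<^sup>2) ^ j
      = fps_X * ((fibF * (catC oo fibF\<^sup>2)) ^ j * inverse (1 - fps_X - fps_X\<^sup>2))"
    by (simp add: power_mult_distrib fibF_eq algebra_simps)
  have "(fibF ^ (j + 1) * (catC oo fibF\<^sup>2) ^ j) / (fps_X * ?V)
      = ((fibF * (catC oo fibF\<^sup>2)) ^ j * inverse (1 - fps_X - fps_X\<^sup>2)) / ?V"
    unfolding numerator by (rule div_mult_mult1[OF fps_X_neq_zero])
  also have "\<dots> = Mj j"
    using \<open>?V $ 0 \<noteq> 0\<close> by (simp add: Mj_eq_power fps_divide_unit mult.assoc)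
  finally show ?thesis ..
qed

fun pm_walks :: "nat \<Rightarrow> int \<Rightarrow> nat" where
  "pm_walks 0 h = (if h = 0 then 1 else 0)"
| "pm_walks (Suc k) h = pm_walks k (h - 1) + pm_walks k (h + 1)"

lemma pm_walks_eq_0_if_gt: "int k < h \<Longrightarrow> pm_walks k h = 0"
  by (induction k arbitrary: h) auto

lemma pm_walks_eq_0_if_odd: "odd (int k + h) \<Longrightarrow> pm_walks k h = 0"
proof (induction k arbitrary: h)
  case (Suc k)
  then have "odd (int k + (h - 1))" "odd (int k + (h + 1))"
    by (simp_all add: algebra_simps)
  with Suc.IH show ?case
    by simp
qed auto

lemma pm_walks_binomial: "pm_walks k (int k - 2 * int d) = k choose d"
proof (induction k arbitrary: d)
  case 0
  then show ?case
    by (cases d) auto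
next
  case (Suc k)
  show ?case
  proof (cases d)
    case 0
    then show ?thesis
      using Suc.IH[of 0] by (simp add: pm_walks_eq_0_if_gt)
  next
    case (Suc d')
    have "int (Suc k) - 2 * int d - 1 = int k - 2 * int d" "int (Suc k) - 2 * int d + 1 = int k - 2 * int d'"
      using Suc by simp_all
    then have "pm_walks (Suc k) (int (Suc k) - 2 * int d) = (k choose d) + (k choose d')"
      by (simp only: pm_walks.simps Suc.IH)
    with Suc show ?thesis
      by simp
  qed
qed

lemma pm_walks_of_nat:
  "pm_walks k (int j) = (if j \<le> k \<and> even (k - j) then k choose ((k - j) div 2) else 0)"
proof -
  consider "k < j" | "j \<le> k" "odd (k - j)" | d where "k = j + 2 * d"
    by (metis le_add_diff_inverse not_le evenE)
  then show ?thesis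
  proof cases
    case 1
    then show ?thesis
      by (simp add: pm_walks_eq_0_if_gt)
  next
    case 2
    then have "odd (int k + int j)"
      by (simp add: of_nat_diff[symmetric] flip: of_nat_add)
    with 2 show ?thesis
      by (simp add: pm_walks_eq_0_if_odd)
  next
    case 3
    then have "int j = int k - 2 * int d" "j \<le> k" "k - j = 2 * d"
      by simp_all
    then show ?thesis
      by (simp only: pm_walks_binomial) simp
  qed
qed

text \<open>Ways to place flat steps of total length n into g gaps: l steps in (l+g-1 choose l)
  ways, n-l of them of length 2. For g = 0 the truncated subtraction gives [n = 0].\<close>

definition gap_fillings :: "nat \<Rightarrow> nat \<Rightarrow> nat" where
  "gap_fillings g n = (\<Sum>l=0..n. (l + g - 1 choose l) * (l choose (n - l)))"

lemma gap_fillings_0: "gap_fillings g 0 = 1"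
  by (simp add: gap_fillings_def)

lemma Suc_choose_split:
  "l \<le> n \<Longrightarrow> Suc l choose (n - l) = (l choose (n - l)) + (if l < n then l choose (n - 1 - l) else 0)"
proof (cases "l < n")
  case True
  then have "n - l = Suc (n - 1 - l)"
    by simp
  with True show ?thesis
    by simp
qed simp

lemma gap_fillings_Suc_Suc:
  "gap_fillings (Suc g) (Suc n) = gap_fillings g (Suc n) + gap_fillings (Suc g) n
     + (if n = 0 then 0 else gap_fillings (Suc g) (n - 1))"
proof -
  have "gap_fillings (Suc g) (Suc n) = (\<Sum>l=0..n. (Suc l + g choose Suc l) * (Suc l choose (n - l)))"
    unfolding gap_fillings_def by (subst sum.atLeast0_atMost_Suc_shift) simp
  also have "\<dots> = (\<Sum>l=0..n. (l + g choose Suc l) * (Suc l choose (n - l)))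
                  + (\<Sum>l=0..n. (l + g choose l) * (Suc l choose (n - l)))"
    unfolding sum.distrib[symmetric] by (rule sum.cong) (simp_all add: algebra_simps)
  also have "(\<Sum>l=0..n. (l + g choose Suc l) * (Suc l choose (n - l))) = gap_fillings g (Suc n)"
    unfolding gap_fillings_def by (subst sum.atLeast0_atMost_Suc_shift) simp
  also have "(\<Sum>l=0..n. (l + g choose l) * (Suc l choose (n - l)))
      = gap_fillings (Suc g) n + (\<Sum>l=0..n. if l < n then (l + g choose l) * (l choose (n - 1 - l)) else 0)"
    unfolding gap_fillings_def sum.distrib[symmetric]
    by (rule sum.cong) (auto simp: Suc_choose_split algebra_simps simp del: binomial_Suc_Suc)
  also have "(\<Sum>l=0..n. if l < n then (l + g choose l) * (l choose (n - 1 - l)) else 0)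
      = (if n = 0 then 0 else gap_fillings (Suc g) (n - 1))"
  proof (cases n)
    case (Suc n')
    have "(\<Sum>l=0..Suc n'. if l < Suc n' then (l + g choose l) * (l choose (Suc n' - 1 - l)) else 0)
        = (\<Sum>l=0..n'. (l + g choose l) * (l choose (n' - l)))"
      by (subst sum.atLeast0_atMost_Suc) (auto intro: sum.cong)
    with Suc show ?thesis
      by (simp add: gap_fillings_def)
  qed simp
  finally show ?thesis
    by simp
qed

lemma gap_fillings_step:
  assumes "k \<le> Suc i"
  shows "gap_fillings (Suc k) (Suc i - k) = gap_fillings k (Suc i - k)
           + (if k \<le> i then gap_fillings (Suc k) (i - k) else 0)
           + (if k < i then gap_fillings (Suc k) (i - 1 - k) else 0)"
proof (cases "k \<le> i")
  case True
  then have "Suc i - k = Suc (i - k)" "i - k = 0 \<longleftrightarrow> \<not> k < i" "i - k - 1 = i - 1 - k"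
    by auto
  with True show ?thesis
    by (simp only: gap_fillings_Suc_Suc) simp
next
  case False
  with assms have "k = Suc i"
    by simp
  then show ?thesis
    by (simp add: gap_fillings_0)
qed

definition updown_count :: "int \<Rightarrow> nat \<Rightarrow> nat" where
  "updown_count h i = (\<Sum>k=0..i. pm_walks k h * gap_fillings (Suc k) (i - k))"

lemma updown_count_Suc:
  "updown_count h (Suc i) = updown_count (h - 1) i + updown_count (h + 1) i + updown_count h i
     + (if i = 0 then 0 else updown_count h (i - 1))"
proof -
  have "updown_count h (Suc i) = (\<Sum>k=0..Suc i. pm_walks k h * gap_fillings k (Suc i - k))
       + (\<Sum>k=0..Suc i. pm_walks k h * (if k \<le> i then gap_fillings (Suc k) (i - k) else 0))
       + (\<Sum>k=0..Suc i. pm_walks k h * (if k < i then gap_fillings (Suc k) (i - 1 - k) else 0))"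
    unfolding updown_count_def sum.distrib[symmetric]
    by (rule sum.cong) (simp_all add: gap_fillings_step distrib_left)
  also have "(\<Sum>k=0..Suc i. pm_walks k h * gap_fillings k (Suc i - k)) = updown_count (h - 1) i + updown_count (h + 1) i"
    unfolding updown_count_def sum.distrib[symmetric]
    by (subst sum.atLeast0_atMost_Suc_shift) (auto simp: gap_fillings_def distrib_right intro: sum.cong)
  also have "(\<Sum>k=0..Suc i. pm_walks k h * (if k \<le> i then gap_fillings (Suc k) (i - k) else 0)) = updown_count h i"
    unfolding updown_count_def by (subst sum.atLeast0_atMost_Suc) (auto intro: sum.cong)
  also have "(\<Sum>k=0..Suc i. pm_walks k h * (if k < i then gap_fillings (Suc k) (i - 1 - k) else 0))
      = (if i = 0 then 0 else updown_count h (i - 1))"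
  proof (cases i)
    case (Suc i')
    show ?thesis
      unfolding updown_count_def Suc
      by (subst sum.atLeast0_atMost_Suc, subst sum.atLeast0_atMost_Suc) (auto intro: sum.cong)
  qed simp
  finally show ?thesis .
qed

lemma grand_motzkin_rec_updown_count: "grand_motzkin_rec updown_count"
  unfolding grand_motzkin_rec_def
  by (simp add: updown_count_Suc) (simp add: updown_count_def gap_fillings_0)

lemma g2_eq_updown_count: "g2 i j = updown_count (int j) i"
  using grand_motzkin_rec_unique[OF grand_motzkin_rec_card_paths grand_motzkin_rec_updown_count]
  by (simp add: g2_def paths_def fun_eq_iff)

lemma sum_if_even_offset:
  fixes F :: "nat \<Rightarrow> 'a::comm_monoid_add"
  shows "(\<Sum>k=0..i. if j \<le> k \<and> even (k - j) then F k else 0)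
       = (\<Sum>m=0..i. if j + 2 * m \<le> i then F (j + 2 * m) else 0)"
proof -
  have "{k \<in> {0..i}. j \<le> k \<and> even (k - j)} = (\<lambda>m. j + 2 * m) ` {m \<in> {0..i}. j + 2 * m \<le> i}"
  proof (intro equalityI subsetI)
    fix k
    assume "k \<in> {k \<in> {0..i}. j \<le> k \<and> even (k - j)}"
    then have "even (k - j)" "j \<le> k" "k \<le> i"
      by auto
    moreover obtain m where "k - j = 2 * m"
      using \<open>even (k - j)\<close> by (rule evenE)
    ultimately show "k \<in> (\<lambda>m. j + 2 * m) ` {m \<in> {0..i}. j + 2 * m \<le> i}"
      by (intro image_eqI[of _ _ m]) auto
  qed auto
  then show ?thesis
    by (simp add: sum.inter_filter[symmetric] sum.reindex inj_on_def)
qed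

lemma g2_eq_sum_updown:
  "g2 i j = (\<Sum>m=0..i. if j + 2 * m \<le> i then (2 * m + j choose m) * gap_fillings (Suc (j + 2 * m)) (i - j - 2 * m) else 0)"
proof -
  have "g2 i j = (\<Sum>k=0..i. if j \<le> k \<and> even (k - j) then (k choose ((k - j) div 2)) * gap_fillings (Suc k) (i - k) else 0)"
    unfolding g2_eq_updown_count updown_count_def pm_walks_of_nat by (intro sum.cong) auto
  also have "\<dots> = (\<Sum>m=0..i. if j + 2 * m \<le> i then (2 * m + j choose m) * gap_fillings (Suc (j + 2 * m)) (i - j - 2 * m) else 0)"
    unfolding sum_if_even_offset by (intro sum.cong) (auto simp: add.commute diff_diff_add)
  finally show ?thesis .
qed

lemma sum_int_atLeastAtMost: "(\<Sum>l = (0::int)..int n. F l) = (\<Sum>l=0..n. F (int l))"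
proof -
  have "{0..int n} = int ` {0..n}"
    by (simp add: image_int_atLeastAtMost)
  then show ?thesis
    by (simp add: sum.reindex)
qed

lemma g2_formula:
  "int (g2 i j) = (\<Sum>m = 0..i. \<Sum>l = 0..int i - int j - 2 * int m.
      int ((2 * m + j) choose m) * int ((nat l + j + 2 * m) choose (nat l))
        * int ((nat l) choose (nat (int i - int j - 2 * int m - l))))"
  unfolding g2_eq_sum_updown of_nat_sum
proof (rule sum.cong)
  fix m
  show "int (if j + 2 * m \<le> i then (2 * m + j choose m) * gap_fillings (Suc (j + 2 * m)) (i - j - 2 * m) else 0)
      = (\<Sum>l = 0..int i - int j - 2 * int m.
          int ((2 * m + j) choose m) * int ((nat l + j + 2 * m) choose (nat l))
            * int ((nat l) choose (nat (int i - int j - 2 * int m - l))))"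
  proof (cases "j + 2 * m \<le> i")
    case True
    define n where "n = i - j - 2 * m"
    have n: "int i - int j - 2 * int m = int n"
      using True by (simp add: n_def)
    have "(\<Sum>l = 0..int n. int ((2 * m + j) choose m) * int ((nat l + j + 2 * m) choose (nat l))
            * int ((nat l) choose (nat (int n - l))))
        = (\<Sum>l = 0..n. int ((2 * m + j) choose m) * int ((l + j + 2 * m) choose l) * int (l choose (n - l)))"
      unfolding sum_int_atLeastAtMost by (rule sum.cong) (auto simp: nat_diff_distrib)
    also have "\<dots> = int ((2 * m + j choose m) * gap_fillings (Suc (j + 2 * m)) n)"
      unfolding gap_fillings_def by (simp add: sum_distrib_left mult.assoc add.assoc)
    finally show ?thesis
      using True by (simp only: n n_def) simp
  qed simp
qed simp

theorem theorem2p2: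
  shows "(\<forall>j. Mj j = (fibF ^ (j + 1) * (fps_compose catC (fibF ^ 2)) ^ j)
                    / (fps_X * (1 - 2 * fibF ^ 2 * fps_compose catC (fibF ^ 2))))
       \<and> (\<forall>i j. j \<le> i \<longrightarrow>
             int (g2 i j) = (\<Sum>m = 0..i. \<Sum>l = 0..int i - int j - 2 * int m.
                int ((2 * m + j) choose m) * int ((nat l + j + 2 * m) choose (nat l))
                  * int ((nat l) choose (nat (int i - int j - 2 * int m - l)))))"
  using Mj_closed_form g2_formula by blast

end
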